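(* Let $\mathbb P$ be a Bernoulli measure on $\partial\mathcal M$, let $a\in\Sigma$, and let $\mathcal M'_a=\{x\in\mathcal M:|x|_a=0\}$ be the submonoid of heaps with no occurrence of $a$. Then $$\sum_{x\in\mathcal M'_a}\mathbb P({\uparrow}x)<\infty,\qquad \sum_{x\in\mathcal M'_a}|x|\,\mathbb P({\uparrow}x)<\infty,\qquad \sum_{x\in\mathcal M'_a}|x|^2\,\mathbb P({\uparrow}x)<\infty.$$
   Context: Let $\Sigma$ be a finite set with at least two elements and $I\subseteq\Sigma\times\Sigma$ a symmetric irreflexive relation such that $(\Sigma,(\Sigma\times\Sigma)\setminus I)$ is connected. The heap monoid $\mathcal M=\mathcal M(\Sigma,I)$ is $\Sigma^*$ modulo the smallest congruence containing $(ab,ba)$ for $(a,b)\in I$; $\cdot$ is concatenation, $0$ the empty heap, $|x|$ the length and $|x|_a$ the number of occurrences of $a$ in any representative word. $x\le y$ iff $y=x\cdot z$ for some $z$. Cliques are heaps formed by distinct pairwise independent pieces; $\mathfrak C$ the nonempty ones; $\gamma\to\gamma'$ iff each piece of $\gamma'$ is dependent on some piece of $\gamma$. Every nonempty heap has a unique Cartier–Foata decomposition $\gamma_1\cdots\gamma_n$ with $\gamma_i\in\mathfrak C$, $\gamma_i\to\gamma_{i+1}$. The boundary $\partial\mathcal M$ is the set of infinite sequences $(\gamma_n)_{n\ge1}$ of nonempty cliques with $\gamma_n\to\gamma_{n+1}$, ordered together with $\mathcal M$ by $\xi\le\xi'$ iff $\gamma_1\cdots\gamma_n\le\gamma'_1\cdots\gamma'_n$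 for all $n$ (finite heaps padded with empty cliques). ${\uparrow}x=\{\xi\in\partial\mathcal M:x\le\xi\}$; $\mathcal F$ the generated $\sigma$-algebra. A Bernoulli measure is a probability $\mathbb P$ on $(\partial\mathcal M,\mathcal F)$ with $\mathbb P({\uparrow}(x\cdot y))=\mathbb P({\uparrow}x)\mathbb P({\uparrow}y)$ and $\mathbb P({\uparrow}x)>0$ for all $x,y$. *)

theory Defs
  imports "HOL-Probability.Probability"
begin

text \<open>Heap monoid M(Sigma,I): the alphabet Sigma is the finite type 'a; I is the
independence relation. Heaps are equivalence classes of words modulo the
smallest congruence containing (ab,ba) for I a b.\<close>

definition swap_step :: "('a \<Rightarrow> 'a \<Rightarrow> bool) \<Rightarrow> 'a list \<Rightarrow> 'a list \<Rightarrow> bool" where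
  "swap_step I u v \<longleftrightarrow> (\<exists>p q a b. I a b \<and> u = p @ [a, b] @ q \<and> v = p @ [b, a] @ q)"

definition heap_equiv :: "('a \<Rightarrow> 'a \<Rightarrow> bool) \<Rightarrow> 'a list \<Rightarrow> 'a list \<Rightarrow> bool" where
  "heap_equiv I = equivclp (swap_step I)"

definition heap_of :: "('a \<Rightarrow> 'a \<Rightarrow> bool) \<Rightarrow> 'a list \<Rightarrow> 'a list set" where
  "heap_of I w = {v. heap_equiv I w v}"

definition heaps :: "('a \<Rightarrow> 'a \<Rightarrow> bool) \<Rightarrow> 'a list set set" where
  "heaps I = range (heap_of I)"

definition rep :: "'a list set \<Rightarrow> 'a list" where
  "rep x = (SOME w. w \<in> x)"

definition hmult :: "('a \<Rightarrow> 'a \<Rightarrow> bool) \<Rightarrow> 'a list set \<Rightarrow> 'a list set \<Rightarrow> 'a list set" where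
  "hmult I x y = heap_of I (rep x @ rep y)"

definition heap_le :: "('a \<Rightarrow> 'a \<Rightarrow> bool) \<Rightarrow> 'a list set \<Rightarrow> 'a list set \<Rightarrow> bool" where
  "heap_le I x y \<longleftrightarrow> (\<exists>z \<in> heaps I. y = hmult I x z)"

definition hlen :: "'a list set \<Rightarrow> nat" where
  "hlen x = length (rep x)"

definition hcount :: "'a \<Rightarrow> 'a list set \<Rightarrow> nat" where
  "hcount a x = count_list (rep x) a"

definition cliques :: "('a \<Rightarrow> 'a \<Rightarrow> bool) \<Rightarrow> 'a set set" where
  "cliques I = {\<gamma>. \<gamma> \<noteq> {} \<and> (\<forall>a\<in>\<gamma>. \<forall>b\<in>\<gamma>. a \<noteq> b \<longrightarrow> I a b)}"

definition arrow :: "('a \<Rightarrow> 'a \<Rightarrow> bool) \<Rightarrow> 'a set \<Rightarrow> 'a set \<Rightarrow> bool" where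
  "arrow I \<gamma> \<gamma>' \<longleftrightarrow> (\<forall>b\<in>\<gamma>'. \<exists>a\<in>\<gamma>. \<not> I a b)"

definition cword :: "'a set \<Rightarrow> 'a list" where
  "cword \<gamma> = (SOME w. distinct w \<and> set w = \<gamma>)"

definition prod_cliques :: "('a \<Rightarrow> 'a \<Rightarrow> bool) \<Rightarrow> (nat \<Rightarrow> 'a set) \<Rightarrow> nat \<Rightarrow> 'a list set" where
  "prod_cliques I c n = heap_of I (concat (map (\<lambda>i. cword (c i)) [0..<n]))"

definition boundary :: "('a \<Rightarrow> 'a \<Rightarrow> bool) \<Rightarrow> (nat \<Rightarrow> 'a set) set" where
  "boundary I = {\<xi>. \<forall>n. \<xi> n \<in> cliques I \<and> arrow I (\<xi> n) (\<xi> (Suc n))}"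

text \<open>Cartier-Foata decomposition of a finite heap, padded with empty cliques.\<close>
definition cf :: "('a \<Rightarrow> 'a \<Rightarrow> bool) \<Rightarrow> 'a list set \<Rightarrow> nat \<Rightarrow> 'a set" where
  "cf I x = (SOME c. \<exists>k. (\<forall>i<k. c i \<in> cliques I) \<and> (\<forall>i. Suc i < k \<longrightarrow> arrow I (c i) (c (Suc i)))
                \<and> (\<forall>i\<ge>k. c i = {}) \<and> prod_cliques I c k = x)"

definition up :: "('a \<Rightarrow> 'a \<Rightarrow> bool) \<Rightarrow> 'a list set \<Rightarrow> (nat \<Rightarrow> 'a set) set" where
  "up I x = {\<xi> \<in> boundary I. \<forall>n. heap_le I (prod_cliques I (cf I x) n) (prod_cliques I \<xi> n)}"

definition bernoulli :: "('a \<Rightarrow> 'a \<Rightarrow> bool) \<Rightarrow> (nat \<Rightarrow> 'a set) measure \<Rightarrow> bool" where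
  "bernoulli I P \<longleftrightarrow> prob_space P \<and> space P = boundary I
     \<and> sets P = sigma_sets (boundary I) (up I ` heaps I)
     \<and> (\<forall>x\<in>heaps I. \<forall>y\<in>heaps I. measure P (up I (hmult I x y)) = measure P (up I x) * measure P (up I y))
     \<and> (\<forall>x\<in>heaps I. measure P (up I x) > 0)"

end

theory Submission
  imports Defs
begin

text \<open>Build a heap by dropping its pieces one at a time: each piece lands on level one more than
the highest earlier piece it depends on. The multiset of (piece, level) pairs is a complete
invariant of the heap, and its level sets are the cliques of the Cartier-Foata decomposition.

For each letter b fix a walk in the dependency graph that starts at b and visits every letter,
and let L bound the lengths of these walks. Pad a heap x without the letter a by the walk that
starts at a topmost piece of x: all new pieces land strictly above the height h(x) of x, and
some a lands at level at most h(x) + L. Therefore two distinct heaps without a whose heights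
agree modulo L have padded heaps with no common upper bound, i.e. disjoint cylinders. By
multiplicativity the cylinder of the padded heap has probability at least c P(up x), where c is
the least probability of a walk, so each of the L residue classes contributes at most 1/c to
the sum of P(up x). The weighted sums follow by writing a heap of length n as a product y z in
n different ways and using multiplicativity again.\<close>

lemma equivclp_map:
  assumes "\<And>x y. R x y \<Longrightarrow> R (f x) (f y)" and "equivclp R u v"
  shows "equivclp R (f u) (f v)"
  using assms(2)
proof (induction rule: equivclp_induct)
  case base then show ?case by simp
next
  case (step y z)
  then show ?case using assms(1) by (meson equivclp_into_equivclp)
qed

lemma equivclp_invariant:
  assumes "\<And>x y. R x y \<Longrightarrow> g x = g y" and "equivclp R u v"
  shows "g u = g v"
  using assms(2) by (induction rule: equivclp_induct) (use assms(1) in auto)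

lemma sorted_wrt_mset_unique:
  assumes "\<And>x y. R x y \<Longrightarrow> \<not> R y x"
  shows "sorted_wrt R xs \<Longrightarrow> sorted_wrt R ys \<Longrightarrow> mset xs = mset ys \<Longrightarrow> xs = ys"
proof (induction xs arbitrary: ys)
  case Nil then show ?case by simp
next
  case (Cons x xs)
  then obtain y ys' where ys: "ys = y # ys'" by (cases ys) auto
  have "x = y"
  proof (rule ccontr)
    assume "x \<noteq> y"
    have "x \<in> set ys" using Cons.prems(3) by (metis list.set_intros(1) set_mset_mset)
    then have "R y x" using Cons.prems(2) ys \<open>x \<noteq> y\<close> by auto
    have "y \<in> set (x # xs)" using Cons.prems(3) ys by (metis list.set_intros(1) set_mset_mset)
    then have "R x y" using Cons.prems(1) \<open>x \<noteq> y\<close> by auto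
    then show False using \<open>R y x\<close> assms by blast
  qed
  then show ?case using Cons ys by auto
qed

lemma sorted_wrt_related:
  assumes "sorted_wrt R xs" "x \<in> set xs" "y \<in> set xs" "x \<noteq> y"
  shows "R x y \<or> R y x"
proof -
  obtain i j where ij: "i < length xs" "j < length xs" "xs ! i = x" "xs ! j = y"
    using assms(2,3) by (metis in_set_conv_nth)
  then have "i \<noteq> j" using assms(4) by auto
  then show ?thesis using assms(1) ij by (metis linorder_neqE_nat sorted_wrt_iff_nth_less)
qed

lemma sorted_wrt_unrelated_length_le_1:
  "sorted_wrt R xs \<Longrightarrow> \<forall>x\<in>set xs. \<forall>y\<in>set xs. \<not> R x y \<Longrightarrow> length xs \<le> 1"
  by (cases xs rule: remdups_adj.cases) auto

lemma length_le_1_set_eq: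
  "length xs \<le> 1 \<Longrightarrow> length ys \<le> 1 \<Longrightarrow> set xs = set ys \<Longrightarrow> xs = ys"
  by (cases xs rule: remdups_adj.cases; cases ys rule: remdups_adj.cases) auto

lemma sorted_wrt_filter_split:
  "sorted_wrt R xs \<Longrightarrow> \<forall>x y. \<not> P x \<longrightarrow> P y \<longrightarrow> \<not> R x y \<Longrightarrow>
   xs = filter P xs @ filter (\<lambda>x. \<not> P x) xs"
proof (induction xs)
  case Nil then show ?case by simp
next
  case (Cons x xs)
  show ?case
  proof (cases "P x")
    case True then show ?thesis using Cons by auto
  next
    case False
    then have "filter P xs = []" using Cons.prems by (auto simp: filter_empty_conv)
    then show ?thesis using False by (simp add: filter_id_conv filter_empty_conv)
  qed
qed

lemma map_fst_concat_levels:
  "sorted_wrt (\<lambda>p q. snd p < snd q) xs \<Longrightarrow> \<forall>p\<in>set xs. 1 \<le> snd p \<and> snd p \<le> k \<Longrightarrow>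
   map fst xs = concat (map (\<lambda>i. map fst (filter (\<lambda>p. snd p = Suc i) xs)) [0..<k])"
proof (induction k arbitrary: xs)
  case 0
  then have "xs = []" by (cases xs) auto
  then show ?case by simp
next
  case (Suc k)
  let ?low = "filter (\<lambda>p. snd p \<le> k) xs"
  have split: "xs = ?low @ filter (\<lambda>p. \<not> snd p \<le> k) xs"
    by (rule sorted_wrt_filter_split[OF Suc.prems(1)]) auto
  have top: "filter (\<lambda>p. \<not> snd p \<le> k) xs = filter (\<lambda>p. snd p = Suc k) xs"
    using Suc.prems(2) by (intro filter_cong) auto
  have IH: "map fst ?low = concat (map (\<lambda>i. map fst (filter (\<lambda>p. snd p = Suc i) ?low)) [0..<k])"
    using Suc.prems by (intro Suc.IH) (auto simp: sorted_wrt_filter)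
  have "map (\<lambda>i. map fst (filter (\<lambda>p. snd p = Suc i) ?low)) [0..<k]
      = map (\<lambda>i. map fst (filter (\<lambda>p. snd p = Suc i) xs)) [0..<k]"
    by (rule map_cong) (auto simp: filter_filter intro!: arg_cong[where f="map fst"] filter_cong)
  then have "map fst xs = concat (map (\<lambda>i. map fst (filter (\<lambda>p. snd p = Suc i) xs)) [0..<k])
      @ map fst (filter (\<lambda>p. snd p = Suc k) xs)"
    using IH split top by (metis map_append)
  then show ?case by simp
qed

lemma set_map_fst_filter_level:
  "set (map fst (filter (\<lambda>p. P (fst p) \<and> snd p = h) xs)) = {x. (x, h) \<in> set xs \<and> P x}"
  by (auto simp: image_iff)

lemma cword: "finite S \<Longrightarrow> distinct (cword S) \<and> set (cword S) = S"
  unfolding cword_def by (rule someI_ex) (metis finite_distinct_list)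

lemma rtranclp_successively_path:
  "R\<^sup>*\<^sup>* b c \<Longrightarrow> \<exists>p. p \<noteq> [] \<and> hd p = b \<and> last p = c \<and> successively R p"
proof (induction rule: converse_rtranclp_induct)
  case base then show ?case by (intro exI[of _ "[c]"]) simp
next
  case (step b y)
  then obtain p where "p \<noteq> []" "hd p = y" "last p = c" "successively R p" by blast
  then show ?case using step(1) by (intro exI[of _ "b # p"]) (auto simp: successively_Cons)
qed

abbreviation proj :: "'a \<Rightarrow> 'a \<Rightarrow> 'a list \<Rightarrow> 'a list" where
  "proj b c u \<equiv> filter (\<lambda>d. d = b \<or> d = c) u"

locale independence =
  fixes I :: "'a \<Rightarrow> 'a \<Rightarrow> bool"
  assumes symp_I: "symp I" and irreflp_I: "irreflp I"
begin

lemma I_sym: "I x y \<Longrightarrow> I y x"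
  using symp_I by (meson sympD)

lemma not_I_refl: "\<not> I x x"
  using irreflp_I by (meson irreflpD)

lemma dependent_pair: "\<not> I b c \<Longrightarrow> x = b \<or> x = c \<Longrightarrow> y = b \<or> y = c \<Longrightarrow> \<not> I x y"
  using not_I_refl I_sym by blast

subsection \<open>Heap equivalence\<close>

lemma heap_equiv_refl [simp]: "heap_equiv I u u"
  by (simp add: heap_equiv_def)

lemma heap_equiv_sym: "heap_equiv I u v \<Longrightarrow> heap_equiv I v u"
  by (simp add: heap_equiv_def equivclp_sym)

lemma heap_equiv_trans: "heap_equiv I u v \<Longrightarrow> heap_equiv I v w \<Longrightarrow> heap_equiv I u w"
  unfolding heap_equiv_def by (meson equivclp_trans)

lemma swap_step_context: "swap_step I u v \<Longrightarrow> swap_step I (p @ u @ q) (p @ v @ q)"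
  unfolding swap_step_def by (metis append.assoc)

lemma heap_equiv_context: "heap_equiv I u v \<Longrightarrow> heap_equiv I (p @ u @ q) (p @ v @ q)"
  unfolding heap_equiv_def
  by (rule equivclp_map[where f="\<lambda>u. p @ u @ q"]) (auto intro: swap_step_context)

lemma heap_equiv_append:
  "heap_equiv I u u' \<Longrightarrow> heap_equiv I v v' \<Longrightarrow> heap_equiv I (u @ v) (u' @ v')"
  using heap_equiv_context[of u u' "[]" v] heap_equiv_context[of v v' u' "[]"] heap_equiv_trans
  by auto

lemma heap_equiv_swap: "I b c \<Longrightarrow> heap_equiv I (p @ b # c # q) (p @ c # b # q)"
  unfolding heap_equiv_def swap_step_def by (rule r_into_equivclp) force

lemma heap_equiv_invariant:
  assumes "\<And>p q b c. I b c \<Longrightarrow> g (p @ b # c # q) = g (p @ c # b # q)"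
    and "heap_equiv I u v"
  shows "g u = g v"
  using assms(2) unfolding heap_equiv_def
proof (rule equivclp_invariant[rotated])
  fix x y assume "swap_step I x y"
  then obtain p q b c where "I b c" "x = p @ [b, c] @ q" "y = p @ [c, b] @ q"
    unfolding swap_step_def by blast
  then show "g x = g y" using assms(1) by simp
qed

lemma heap_equiv_length: "heap_equiv I u v \<Longrightarrow> length u = length v"
  by (rule heap_equiv_invariant) auto

lemma heap_equiv_count_list: "heap_equiv I u v \<Longrightarrow> count_list u a = count_list v a"
  by (rule heap_equiv_invariant[where g="\<lambda>u. count_list u a"]) auto

lemma heap_equiv_move_front:
  "\<forall>e\<in>set u. I d e \<Longrightarrow> heap_equiv I (u @ d # v) (d # u @ v)"
proof (induction u)
  case Nil then show ?case by simp
next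
  case (Cons e u)
  have "heap_equiv I (e # u @ d # v) (e # d # u @ v)"
    using heap_equiv_context[of "u @ d # v" "d # u @ v" "[e]" "[]"] Cons by auto
  moreover have "heap_equiv I (e # d # u @ v) (d # e # u @ v)"
    using heap_equiv_swap[of e d "[]" "u @ v"] Cons.prems I_sym by auto
  ultimately show ?case using heap_equiv_trans by auto
qed

text \<open>Peel off the first letter d of u: in v every letter before the first d is independent
of d, so d can be moved to the front of v.\<close>

lemma heap_equiv_if_proj_eq:
  "\<forall>b c. \<not> I b c \<longrightarrow> proj b c u = proj b c v \<Longrightarrow> heap_equiv I u v"
proof (induction u arbitrary: v)
  case Nil
  have "v = []"
  proof (rule ccontr)
    assume "v \<noteq> []"
    then obtain d where "d \<in> set v" by (cases v) auto
    moreover have "proj d d [] = proj d d v" using Nil not_I_refl by blast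
    ultimately show False by (auto simp: empty_filter_conv)
  qed
  then show ?case by simp
next
  case (Cons d u)
  have "proj d d (d # u) = proj d d v" using Cons.prems not_I_refl by blast
  moreover have "d \<in> set (proj d d (d # u))" by simp
  ultimately have "d \<in> set (proj d d v)" by simp
  then have "d \<in> set v" by simp
  then obtain v1 v2 where v: "v = v1 @ d # v2" "d \<notin> set v1" by (meson split_list_first)
  have indep: "\<forall>e\<in>set v1. I d e"
  proof
    fix e assume e: "e \<in> set v1"
    show "I d e"
    proof (rule ccontr)
      assume "\<not> I d e"
      then have "proj d e (d # u) = proj d e v" using Cons.prems by blast
      then have "d # proj d e u = proj d e v1 @ d # proj d e v2" using v by simp
      moreover have "proj d e v1 \<noteq> []" using e by (simp add: filter_empty_conv) blast
      ultimately have "hd (proj d e v1) = d" by (metis hd_append2 list.sel(1))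
      then show False using v(2) hd_in_set[OF \<open>proj d e v1 \<noteq> []\<close>] by auto
    qed
  qed
  have "\<forall>b c. \<not> I b c \<longrightarrow> proj b c u = proj b c (v1 @ v2)"
  proof (intro allI impI)
    fix b c assume bc: "\<not> I b c"
    have "proj b c (d # u) = proj b c v" using Cons.prems bc by blast
    then have eq: "proj b c (d # u) = proj b c v1 @ proj b c (d # v2)" using v by simp
    show "proj b c u = proj b c (v1 @ v2)"
    proof (cases "d = b \<or> d = c")
      case True
      have "\<not> (e = b \<or> e = c)" if "e \<in> set v1" for e
        using indep that v(2) dependent_pair[OF bc True, of e] by auto
      then have "proj b c v1 = []" by (simp add: filter_empty_conv)
      then show ?thesis using eq True by auto
    next
      case False then show ?thesis using eq by auto
    qed
  qed
  then have "heap_equiv I (d # u) (d # v1 @ v2)"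
    using Cons.IH heap_equiv_context[of u "v1 @ v2" "[d]" "[]"] by simp
  moreover have "heap_equiv I v (d # v1 @ v2)"
    using heap_equiv_move_front[OF indep, of v2] v(1) by simp
  ultimately show ?case by (metis heap_equiv_trans heap_equiv_sym)
qed

subsection \<open>Heaps as equivalence classes\<close>

lemma in_heap_of: "w \<in> heap_of I w"
  by (simp add: heap_of_def)

lemma heap_of_eq_iff: "heap_of I u = heap_of I v \<longleftrightarrow> heap_equiv I u v"
proof
  assume "heap_of I u = heap_of I v"
  then have "v \<in> heap_of I u" using in_heap_of by metis
  then show "heap_equiv I u v" by (simp add: heap_of_def)
next
  assume "heap_equiv I u v"
  then show "heap_of I u = heap_of I v"
    unfolding heap_of_def using heap_equiv_sym heap_equiv_trans by blast
qed

lemma heap_equiv_rep_heap_of: "heap_equiv I w (rep (heap_of I w))"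
proof -
  have "rep (heap_of I w) \<in> heap_of I w"
    unfolding rep_def by (rule someI, rule in_heap_of)
  then show ?thesis by (simp add: heap_of_def)
qed

lemma heap_of_rep: "x \<in> heaps I \<Longrightarrow> heap_of I (rep x) = x"
  unfolding heaps_def using heap_equiv_rep_heap_of heap_of_eq_iff
  by (metis heap_equiv_sym imageE)

lemma heap_of_in_heaps [simp]: "heap_of I w \<in> heaps I"
  by (simp add: heaps_def)

lemma hmult_in_heaps: "hmult I x y \<in> heaps I"
  by (simp add: hmult_def)

lemma hmult_heap_of: "hmult I (heap_of I u) (heap_of I v) = heap_of I (u @ v)"
  unfolding hmult_def heap_of_eq_iff
  by (meson heap_equiv_append heap_equiv_sym heap_equiv_rep_heap_of)

lemma heap_equiv_rep_hmult: "heap_equiv I (rep (hmult I x y)) (rep x @ rep y)"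
  unfolding hmult_def using heap_equiv_rep_heap_of heap_equiv_sym by blast

lemma hlen_heap_of: "hlen (heap_of I w) = length w"
  unfolding hlen_def using heap_equiv_rep_heap_of heap_equiv_length by metis

lemma hcount_heap_of: "hcount a (heap_of I w) = count_list w a"
  unfolding hcount_def using heap_equiv_rep_heap_of heap_equiv_count_list by metis

lemma hlen_hmult: "hlen (hmult I x y) = hlen x + hlen y"
  unfolding hmult_def hlen_heap_of by (simp add: hlen_def)

subsection \<open>Levels of pieces\<close>

text \<open>A partially built heap is a list of pairs (letter, level), level 0 being the ground; a
new piece c lands one above its support level.\<close>

definition support_level :: "('a \<times> nat) list \<Rightarrow> 'a \<Rightarrow> nat" where
  "support_level A c = Max (insert 0 (snd ` {p \<in> set A. \<not> I (fst p) c}))"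

definition stack :: "('a \<times> nat) list \<Rightarrow> 'a list \<Rightarrow> ('a \<times> nat) list" where
  "stack A v = foldl (\<lambda>B b. B @ [(b, Suc (support_level B b))]) A v"

definition stacked :: "('a \<times> nat) list \<Rightarrow> 'a list \<Rightarrow> ('a \<times> nat) list" where
  "stacked A v = drop (length A) (stack A v)"

definition levels :: "'a list \<Rightarrow> ('a \<times> nat) list" where
  "levels w = stack [] w"

definition max_level :: "('a \<times> nat) list \<Rightarrow> nat" where
  "max_level A = Max (insert 0 (snd ` set A))"

definition height :: "'a list \<Rightarrow> nat" where
  "height w = max_level (levels w)"

definition level_sorted :: "('a \<times> nat) list \<Rightarrow> bool" where
  "level_sorted A \<longleftrightarrow> sorted_wrt (\<lambda>p q. \<not> I (fst p) (fst q) \<longrightarrow> snd p < snd q) A"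

lemma stack_Nil [simp]: "stack A [] = A"
  by (simp add: stack_def)

lemma stack_Cons: "stack A (b # v) = stack (A @ [(b, Suc (support_level A b))]) v"
  by (simp add: stack_def)

lemma stack_append: "stack A (u @ v) = stack (stack A u) v"
  by (simp add: stack_def)

lemma stack_eq_append_stacked: "stack A v = A @ stacked A v"
  and map_fst_stacked: "map fst (stacked A v) = v"
proof -
  have "\<exists>B. stack A v = A @ B \<and> map fst B = v"
  proof (induction v arbitrary: A)
    case Nil then show ?case by simp
  next
    case (Cons b v)
    let ?x = "(b, Suc (support_level A b))"
    obtain B where "stack (A @ [?x]) v = (A @ [?x]) @ B" "map fst B = v"
      using Cons.IH by blast
    then show ?case by (auto simp: stack_Cons intro!: exI[of _ "?x # B"])
  qed
  then show "stack A v = A @ stacked A v" "map fst (stacked A v) = v"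
    by (auto simp: stacked_def)
qed

lemma map_fst_levels: "map fst (levels w) = w"
  by (metis levels_def map_fst_stacked stack_eq_append_stacked append_Nil)

lemma stacked_Cons:
  "stacked A (b # v) = (b, Suc (support_level A b)) # stacked (A @ [(b, Suc (support_level A b))]) v"
proof -
  have "stack A (b # v) = (A @ [(b, Suc (support_level A b))]) @ stacked (A @ [(b, Suc (support_level A b))]) v"
    unfolding stack_Cons by (rule stack_eq_append_stacked)
  then show ?thesis unfolding stacked_def[of A "b # v"] by simp
qed

lemma stacked_append: "stacked A (u @ v) = stacked A u @ stacked (stack A u) v"
proof -
  have "stack A (u @ v) = A @ (stacked A u @ stacked (stack A u) v)"
    by (metis append.assoc stack_append stack_eq_append_stacked)
  then show ?thesis unfolding stacked_def[of A "u @ v"] by simp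
qed

lemma support_level_ge: "p \<in> set A \<Longrightarrow> \<not> I (fst p) c \<Longrightarrow> snd p \<le> support_level A c"
  unfolding support_level_def by (rule Max_ge) auto

lemma support_level_mono: "set A \<subseteq> set B \<Longrightarrow> support_level A c \<le> support_level B c"
  unfolding support_level_def by (rule Max_mono) auto

lemma support_level_le_max_level: "support_level A c \<le> max_level A"
  unfolding support_level_def max_level_def by (rule Max_mono) auto

lemma max_level_ge: "p \<in> set A \<Longrightarrow> snd p \<le> max_level A"
  unfolding max_level_def by (rule Max_ge) auto

lemma support_level_cases:
  "support_level A c = 0 \<or> (\<exists>p \<in> set A. \<not> I (fst p) c \<and> snd p = support_level A c)"
proof -
  have "support_level A c \<in> insert 0 (snd ` {p \<in> set A. \<not> I (fst p) c})"
    unfolding support_level_def by (rule Max_in) auto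
  then show ?thesis by auto
qed

lemma support_level_snoc_independent: "I b c \<Longrightarrow> support_level (A @ [(b, h)]) c = support_level A c"
  unfolding support_level_def
  by (rule arg_cong[where f="\<lambda>S. Max (insert 0 (snd ` S))"]) (auto simp: I_sym)

lemma mset_stack_cong: "mset A = mset B \<Longrightarrow> mset (stack A v) = mset (stack B v)"
proof (induction v arbitrary: A B)
  case Nil then show ?case by simp
next
  case (Cons b v)
  have "support_level A b = support_level B b"
    using Cons.prems by (metis set_mset_mset support_level_def)
  then show ?case unfolding stack_Cons using Cons by simp
qed

text \<open>Commuting two independent letters changes neither of their levels.\<close>

lemma mset_levels_heap_equiv: "heap_equiv I u v \<Longrightarrow> mset (levels u) = mset (levels v)"
proof (rule heap_equiv_invariant[where g="\<lambda>u. mset (levels u)"])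
  fix p q b c assume "I b c"
  then have "mset (stack (stack [] p) [b, c]) = mset (stack (stack [] p) [c, b])"
    by (simp add: stack_def support_level_snoc_independent I_sym)
  then have "mset (stack (stack (stack [] p) [b, c]) q) = mset (stack (stack (stack [] p) [c, b]) q)"
    by (rule mset_stack_cong)
  then show "mset (levels (p @ b # c # q)) = mset (levels (p @ c # b # q))"
    by (simp add: levels_def stack_append[symmetric])
qed

lemma level_sorted_stack: "level_sorted A \<Longrightarrow> level_sorted (stack A v)"
proof (induction v arbitrary: A)
  case Nil then show ?case by simp
next
  case (Cons b v)
  have "level_sorted (A @ [(b, Suc (support_level A b))])"
    using Cons.prems support_level_ge by (fastforce simp: level_sorted_def sorted_wrt_append)
  then show ?case by (simp add: stack_Cons Cons.IH)
qed

lemma level_sorted_levels: "level_sorted (levels w)"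
  unfolding levels_def by (rule level_sorted_stack) (simp add: level_sorted_def)

lemma levels_pos:
  assumes "p \<in> set (levels w)" shows "0 < snd p"
proof -
  have "\<forall>p\<in>set A. 0 < snd p \<Longrightarrow> \<forall>p\<in>set (stack A v). 0 < snd p" for A v
  proof (induction v arbitrary: A)
    case (Cons b v) then show ?case unfolding stack_Cons by (intro Cons.IH) auto
  qed simp
  from this[of "[]" w] show ?thesis using assms by (simp add: levels_def)
qed

lemma level_le_height: "p \<in> set (levels w) \<Longrightarrow> snd p \<le> height w"
  unfolding height_def by (rule max_level_ge)

lemma stack_level_le: "p \<in> set (stack A v) \<Longrightarrow> snd p \<le> max_level A + length v"
proof (induction v arbitrary: A)
  case Nil then show ?case by (simp add: max_level_ge)
next
  case (Cons b v)
  let ?A = "A @ [(b, Suc (support_level A b))]"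
  have "\<forall>p\<in>set ?A. snd p \<le> Suc (max_level A)"
    using support_level_le_max_level[of A b] max_level_ge[of _ A] by (auto intro: le_SucI)
  then have "max_level ?A \<le> Suc (max_level A)"
    by (subst max_level_def, intro Max.boundedI) auto
  then show ?case using Cons by (force simp: stack_Cons)
qed

lemma stacked_level_gt:
  "\<forall>c. k \<le> support_level A c \<Longrightarrow> p \<in> set (stacked A v) \<Longrightarrow> k < snd p"
proof (induction v arbitrary: A)
  case Nil then show ?case by (simp add: stacked_def)
next
  case (Cons b v)
  let ?A = "A @ [(b, Suc (support_level A b))]"
  have "\<forall>c. k \<le> support_level ?A c"
    using Cons.prems(1) support_level_mono[of A ?A] le_trans by (metis set_append Un_upper1)
  then show ?case using Cons by (auto simp: stacked_Cons le_imp_less_Suc)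
qed

lemma stacked_chain_level_gt:
  "successively (\<lambda>x y. \<not> I x y) (b # v) \<Longrightarrow> h \<le> support_level A b \<Longrightarrow>
   p \<in> set (stacked A (b # v)) \<Longrightarrow> h < snd p"
proof (induction v arbitrary: A b h p)
  case Nil then show ?case by (simp add: stacked_def stack_def)
next
  case (Cons b' v)
  let ?A = "A @ [(b, Suc (support_level A b))]"
  have "Suc (support_level A b) \<le> support_level ?A b'"
    using support_level_ge[of "(b, Suc (support_level A b))" ?A b'] Cons.prems(1) by auto
  then have IH: "q \<in> set (stacked ?A (b' # v)) \<Longrightarrow> Suc (support_level A b) < snd q" for q
    using Cons.IH[of b' "Suc (support_level A b)" ?A] Cons.prems(1) by auto
  have "p = (b, Suc (support_level A b)) \<or> p \<in> set (stacked ?A (b' # v))"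
    using Cons.prems(3) by (simp add: stacked_Cons[of A b "b' # v"])
  then show ?case using IH Cons.prems(2) by fastforce
qed

lemma levels_support:
  assumes "p \<in> set (levels w)" "1 < snd p"
  shows "\<exists>q\<in>set (levels w). \<not> I (fst q) (fst p) \<and> snd q = snd p - 1"
proof -
  let ?supported = "\<lambda>A. \<forall>p\<in>set A. 1 < snd p \<longrightarrow>
    (\<exists>q\<in>set A. \<not> I (fst q) (fst p) \<and> snd q = snd p - 1)"
  have "?supported A \<Longrightarrow> ?supported (stack A v)" for A v
  proof (induction v arbitrary: A)
    case Nil then show ?case by simp
  next
    case (Cons b v)
    have "?supported (A @ [(b, Suc (support_level A b))])"
      using Cons.prems support_level_cases[of A b] by (fastforce simp: Ball_def)
    then show ?case unfolding stack_Cons by (rule Cons.IH)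
  qed
  then show ?thesis using assms by (auto simp: levels_def)
qed

lemma levels_at_every_height:
  assumes "1 \<le> h" "h \<le> height w"
  shows "\<exists>p\<in>set (levels w). snd p = h"
proof -
  have "height w \<in> insert 0 (snd ` set (levels w))"
    unfolding height_def max_level_def by (rule Max_in) auto
  then obtain c where "(c, height w) \<in> set (levels w)" using assms by auto
  then have top: "\<exists>p\<in>set (levels w). snd p = height w" by (metis snd_conv)
  have "n < height w \<Longrightarrow> \<exists>p\<in>set (levels w). snd p = height w - n" for n
  proof (induction n)
    case 0 then show ?case using top by simp
  next
    case (Suc n)
    then obtain p where p: "p \<in> set (levels w)" "snd p = height w - n" by auto
    moreover have "1 < snd p" using p(2) Suc.prems by linarith
    ultimately obtain q where "q \<in> set (levels w)" "snd q = snd p - 1"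
      using levels_support by blast
    then show ?case using p Suc.prems by auto
  qed
  from this[of "height w - h"] show ?thesis using assms by auto
qed

lemma same_level_independent:
  assumes "p \<in> set (levels w)" "q \<in> set (levels w)" "p \<noteq> q" "snd p = snd q"
  shows "I (fst p) (fst q)"
  using sorted_wrt_related[OF level_sorted_levels[of w, unfolded level_sorted_def] assms(1-3)]
    assms(4) I_sym by auto

lemma proj_levels: "proj b c u = map fst (filter (\<lambda>p. fst p = b \<or> fst p = c) (levels u))"
  by (subst (1) map_fst_levels[symmetric]) (simp add: filter_map comp_def)

lemma sorted_levels_dependent:
  "\<not> I b c \<Longrightarrow> sorted_wrt (\<lambda>p q. snd p < snd q) (filter (\<lambda>p. fst p = b \<or> fst p = c) (levels u))"
proof -
  assume bc: "\<not> I b c"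
  have "sorted_wrt (\<lambda>p q. \<not> I (fst p) (fst q) \<longrightarrow> snd p < snd q)
      (filter (\<lambda>p. fst p = b \<or> fst p = c) (levels u))"
    using level_sorted_levels[of u] unfolding level_sorted_def by (rule sorted_wrt_filter)
  then show ?thesis
    by (rule sorted_wrt_mono_rel[rotated]) (use dependent_pair[OF bc] in auto)
qed

lemma heap_equiv_iff_mset_levels: "heap_equiv I u v \<longleftrightarrow> mset (levels u) = mset (levels v)"
proof
  assume m: "mset (levels u) = mset (levels v)"
  show "heap_equiv I u v"
  proof (rule heap_equiv_if_proj_eq, intro allI impI)
    fix b c assume bc: "\<not> I b c"
    let ?Q = "\<lambda>p. fst p = b \<or> fst p = c"
    have "filter ?Q (levels u) = filter ?Q (levels v)"
      using m by (intro sorted_wrt_mset_unique[OF _ sorted_levels_dependent[OF bc]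
            sorted_levels_dependent[OF bc]]) (auto simp: mset_filter)
    then show "proj b c u = proj b c v" by (simp only: proj_levels)
  qed
qed (rule mset_levels_heap_equiv)

subsection \<open>Cartier-Foata decomposition\<close>

definition level_set :: "'a list \<Rightarrow> nat \<Rightarrow> 'a set" where
  "level_set w i = {b. (b, Suc i) \<in> set (levels w)}"

lemma finite_level_set: "finite (level_set w i)"
proof -
  have "level_set w i \<subseteq> fst ` set (levels w)" by (force simp: level_set_def)
  then show ?thesis by (rule finite_subset) simp
qed

lemma level_set_empty: "height w \<le> i \<Longrightarrow> level_set w i = {}"
  using level_le_height by (fastforce simp: level_set_def)

lemma level_set_in_cliques: "i < height w \<Longrightarrow> level_set w i \<in> cliques I"
proof -
  assume "i < height w"
  then obtain p where "p \<in> set (levels w)" "snd p = Suc i"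
    using levels_at_every_height[of "Suc i" w] by auto
  then have "fst p \<in> level_set w i" by (metis level_set_def mem_Collect_eq prod.collapse)
  moreover have "I b c" if "b \<in> level_set w i" "c \<in> level_set w i" "b \<noteq> c" for b c
    using that same_level_independent[of "(b, Suc i)" w "(c, Suc i)"] by (simp add: level_set_def)
  ultimately show ?thesis by (auto simp: cliques_def)
qed

lemma arrow_level_set: "arrow I (level_set w i) (level_set w (Suc i))"
  unfolding arrow_def
proof
  fix b assume "b \<in> level_set w (Suc i)"
  then obtain q where "q \<in> set (levels w)" "\<not> I (fst q) b" "snd q = Suc i"
    using levels_support[of "(b, Suc (Suc i))" w] by (auto simp: level_set_def)
  then show "\<exists>a\<in>level_set w i. \<not> I a b"
    by (intro bexI[of _ "fst q"]) (auto simp: level_set_def, metis prod.collapse)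
qed

text \<open>Compare the projections to a dependent pair: on both sides the letters of the pair appear
in order of increasing level, and each level contains at most one of them.\<close>

lemma heap_equiv_level_sets:
  "heap_equiv I w (concat (map (\<lambda>i. cword (level_set w i)) [0..<height w]))"
proof (rule heap_equiv_if_proj_eq, intro allI impI)
  fix b d assume bd: "\<not> I b d"
  define L where "L = filter (\<lambda>p. fst p = b \<or> fst p = d) (levels w)"
  have L_sorted: "sorted_wrt (\<lambda>p q. snd p < snd q) L"
    unfolding L_def by (rule sorted_levels_dependent[OF bd])
  have L_range: "\<forall>p\<in>set L. 1 \<le> snd p \<and> snd p \<le> height w"
    using levels_pos level_le_height by (force simp: L_def Suc_le_eq)
  have "proj b d w = map fst L" by (simp add: L_def proj_levels)
  also have "\<dots> = concat (map (\<lambda>i. map fst (filter (\<lambda>p. snd p = Suc i) L)) [0..<height w])"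
    by (rule map_fst_concat_levels[OF L_sorted L_range])
  also have "\<dots> = concat (map (\<lambda>i. proj b d (cword (level_set w i))) [0..<height w])"
  proof (intro arg_cong[where f=concat] map_cong refl)
    fix i
    let ?R = "map fst (filter (\<lambda>p. snd p = Suc i) L)"
    have R_short: "length ?R \<le> 1"
      using sorted_wrt_unrelated_length_le_1[of "\<lambda>p q. snd p < snd q" "filter (\<lambda>p. snd p = Suc i) L"]
        L_sorted by (auto simp: sorted_wrt_filter)
    have "filter (\<lambda>p. snd p = Suc i) L
        = filter (\<lambda>p. (\<lambda>x. x = b \<or> x = d) (fst p) \<and> snd p = Suc i) (levels w)"
      by (simp add: L_def filter_filter)
    then have R_set: "set ?R = {x. (x, Suc i) \<in> set (levels w) \<and> (x = b \<or> x = d)}"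
      using set_map_fst_filter_level[of "\<lambda>x. x = b \<or> x = d" "Suc i" "levels w"] by simp
    have cw: "distinct (cword (level_set w i)) \<and> set (cword (level_set w i)) = level_set w i"
      by (rule cword[OF finite_level_set])
    then have C_set: "set (proj b d (cword (level_set w i))) = set ?R"
      using R_set by (auto simp: level_set_def)
    have "length (proj b d (cword (level_set w i))) = card (set ?R)"
      using cw C_set by (metis distinct_card distinct_filter)
    also have "\<dots> \<le> 1" using R_short card_length le_trans by blast
    finally show "?R = proj b d (cword (level_set w i))"
      using R_short C_set by (intro length_le_1_set_eq) auto
  qed
  also have "\<dots> = proj b d (concat (map (\<lambda>i. cword (level_set w i)) [0..<height w]))"
    by (simp add: filter_concat map_map comp_def)
  finally show "proj b d w = proj b d (concat (map (\<lambda>i. cword (level_set w i)) [0..<height w]))" .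
qed

lemma cartier_foata_exists:
  assumes "x \<in> heaps I"
  shows "\<exists>c k. (\<forall>i<k. c i \<in> cliques I) \<and> (\<forall>i. Suc i < k \<longrightarrow> arrow I (c i) (c (Suc i)))
           \<and> (\<forall>i\<ge>k. c i = {}) \<and> prod_cliques I c k = x"
proof (intro exI conjI)
  let ?w = "rep x"
  show "\<forall>i<height ?w. level_set ?w i \<in> cliques I"
    using level_set_in_cliques by blast
  show "\<forall>i. Suc i < height ?w \<longrightarrow> arrow I (level_set ?w i) (level_set ?w (Suc i))"
    using arrow_level_set by blast
  show "\<forall>i\<ge>height ?w. level_set ?w i = {}"
    using level_set_empty by blast
  show "prod_cliques I (level_set ?w) (height ?w) = x"
    unfolding prod_cliques_def using heap_equiv_level_sets[of ?w] heap_of_rep[OF assms]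
    by (metis heap_of_eq_iff heap_equiv_sym)
qed

lemma prod_cliques_cf: "x \<in> heaps I \<Longrightarrow> \<exists>k. prod_cliques I (cf I x) k = x"
  using someI_ex[OF cartier_foata_exists] unfolding cf_def by blast

definition boundary_word :: "(nat \<Rightarrow> 'a set) \<Rightarrow> nat \<Rightarrow> 'a list" where
  "boundary_word \<xi> n = concat (map (\<lambda>i. cword (\<xi> i)) [0..<n])"

lemma boundary_word_prefix: "n \<le> m \<Longrightarrow> \<exists>r. boundary_word \<xi> m = boundary_word \<xi> n @ r"
  unfolding boundary_word_def by (metis concat_append le_Suc_ex map_append upt_add_eq_append zero_le)

lemma up_boundary_word:
  assumes "x \<in> heaps I" "\<xi> \<in> up I x"
  shows "\<exists>n. \<forall>m\<ge>n. \<exists>t. heap_equiv I (boundary_word \<xi> m) (rep x @ t)"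
proof -
  obtain k where k: "prod_cliques I (cf I x) k = x" using prod_cliques_cf[OF assms(1)] by blast
  have "heap_le I (prod_cliques I (cf I x) k) (prod_cliques I \<xi> k)"
    using assms(2) by (simp add: up_def)
  then obtain z where "prod_cliques I \<xi> k = hmult I x z" unfolding k heap_le_def by blast
  then have xz: "heap_equiv I (boundary_word \<xi> k) (rep x @ rep z)"
    unfolding prod_cliques_def hmult_def boundary_word_def[symmetric] heap_of_eq_iff .
  have "\<exists>t. heap_equiv I (boundary_word \<xi> m) (rep x @ t)" if km: "k \<le> m" for m
  proof -
    obtain r where r: "boundary_word \<xi> m = boundary_word \<xi> k @ r"
      using boundary_word_prefix[OF km] by blast
    have "heap_equiv I (boundary_word \<xi> m) ((rep x @ rep z) @ r)"
      unfolding r by (rule heap_equiv_append[OF xz heap_equiv_refl])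
    then show ?thesis by (metis append.assoc)
  qed
  then show ?thesis by blast
qed

end

subsection \<open>Padding a heap by a covering walk\<close>

locale connected_independence = independence I for I :: "'a::finite \<Rightarrow> 'a \<Rightarrow> bool" +
  assumes dependency_connected: "\<forall>b c. (\<lambda>x y. \<not> I x y)\<^sup>*\<^sup>* b c"
begin

definition top_piece :: "'a list \<Rightarrow> 'a" where
  "top_piece w = (SOME b. (b, height w) \<in> set (levels w))"

lemma height_le_support_level_top_piece: "height w \<le> support_level (levels w) (top_piece w)"
proof (cases "height w = 0")
  case False
  have "height w \<in> insert 0 (snd ` set (levels w))"
    unfolding height_def max_level_def by (rule Max_in) auto
  then obtain b where "(b, height w) \<in> set (levels w)" using False by auto
  then have "(top_piece w, height w) \<in> set (levels w)" unfolding top_piece_def by (rule someI)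
  then show ?thesis using support_level_ge[of "(top_piece w, height w)"] not_I_refl by simp
qed simp

lemma covering_walk_exists:
  "finite S \<Longrightarrow> \<exists>w. w \<noteq> [] \<and> hd w = b \<and> successively (\<lambda>x y. \<not> I x y) w \<and> S \<subseteq> set w"
proof (induction rule: finite_induct)
  case empty then show ?case by (intro exI[of _ "[b]"]) simp
next
  case (insert c S)
  then obtain w where w: "w \<noteq> []" "hd w = b" "successively (\<lambda>x y. \<not> I x y) w" "S \<subseteq> set w"
    by blast
  obtain p where p: "p \<noteq> []" "hd p = last w" "last p = c" "successively (\<lambda>x y. \<not> I x y) p"
    using rtranclp_successively_path[of "\<lambda>x y. \<not> I x y" "last w" c] dependency_connected by blast
  have p_eq: "p = last w # tl p" using p(1,2) by (metis list.collapse)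
  have "successively (\<lambda>x y. \<not> I x y) (w @ tl p)"
  proof (cases "tl p = []")
    case False
    have "successively (\<lambda>x y. \<not> I x y) (last w # tl p)" using p(4) p_eq by metis
    then show ?thesis using w False by (simp add: successively_append_iff successively_Cons)
  qed (use w in simp)
  moreover have "c \<in> set (w @ tl p)"
  proof (cases "tl p = []")
    case True
    then have "c = last w" using p p_eq by (metis last_ConsL)
    then show ?thesis using w(1) by simp
  next
    case False
    then have "c = last (tl p)" using p p_eq by (metis last_ConsR)
    then show ?thesis using False by simp
  qed
  ultimately show ?case using w by (intro exI[of _ "w @ tl p"]) auto
qed

definition walk :: "'a \<Rightarrow> 'a list" where
  "walk b = (SOME w. w \<noteq> [] \<and> hd w = b \<and> successively (\<lambda>x y. \<not> I x y) w \<and> set w = UNIV)"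

lemma walk: "walk b \<noteq> [] \<and> hd (walk b) = b \<and> successively (\<lambda>x y. \<not> I x y) (walk b) \<and> set (walk b) = UNIV"
  unfolding walk_def by (rule someI_ex) (use covering_walk_exists[of UNIV b] in auto)

definition walk_bound :: nat where
  "walk_bound = Max (range (\<lambda>b. length (walk b)))"

lemma length_walk_le: "length (walk b) \<le> walk_bound"
  unfolding walk_bound_def by (rule Max_ge) auto

lemma walk_bound_pos: "0 < walk_bound"
  using length_walk_le[of undefined] walk[of undefined] by (cases "walk undefined") auto

lemma levels_pad: "levels (x @ walk (top_piece x) @ s) = levels x @ stacked (levels x) (walk (top_piece x) @ s)"
  unfolding levels_def by (simp add: stack_append[symmetric] stack_eq_append_stacked[symmetric])

text \<open>The walk starts on top of x, hence climbs above height x; once it has visited every letter,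
everything stacked afterwards lands above height x as well.\<close>

lemma pad_levels_above:
  assumes "p \<in> set (stacked (levels x) (walk (top_piece x) @ s))"
  shows "height x < snd p"
proof -
  let ?A = "levels x" and ?w = "walk (top_piece x)"
  have w_eq: "?w = top_piece x # tl ?w" using walk by (metis list.collapse)
  have chain: "successively (\<lambda>x y. \<not> I x y) (top_piece x # tl ?w)"
    using walk[of "top_piece x"] w_eq by metis
  have walk_above: "height x < snd q" if "q \<in> set (stacked ?A ?w)" for q
    using stacked_chain_level_gt[OF chain height_le_support_level_top_piece, of q] that w_eq
    by metis
  have "Suc (height x) \<le> support_level (stack ?A ?w) c" for c
  proof -
    have "c \<in> set (map fst (stacked ?A ?w))" using walk by (simp only: map_fst_stacked) simp
    then obtain q where q: "q \<in> set (stacked ?A ?w)" "fst q = c" by auto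
    then have "snd q \<le> support_level (stack ?A ?w) c"
      using support_level_ge[of q _ c] not_I_refl by (simp add: stack_eq_append_stacked)
    then show ?thesis using walk_above[OF q(1)] by simp
  qed
  then have rest_above: "height x < snd q" if "q \<in> set (stacked (stack ?A ?w) s)" for q
    using stacked_level_gt[of "Suc (height x)" "stack ?A ?w" q s] that by auto
  have "p \<in> set (stacked ?A ?w) \<or> p \<in> set (stacked (stack ?A ?w) s)"
    using assms by (simp add: stacked_append)
  then show ?thesis using walk_above rest_above by blast
qed

lemma pad_level_a_le:
  "\<exists>h. (a, h) \<in> set (stacked (levels x) (walk (top_piece x) @ s)) \<and> h \<le> height x + walk_bound"
proof -
  let ?A = "levels x" and ?w = "walk (top_piece x)"
  have "a \<in> set (map fst (stacked ?A ?w))" using walk by (simp only: map_fst_stacked) simp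
  then obtain p where p: "p \<in> set (stacked ?A ?w)" "fst p = a" by auto
  then have "snd p \<le> max_level ?A + length ?w"
    using stack_level_le[of p ?A ?w] by (simp add: stack_eq_append_stacked)
  then have "snd p \<le> height x + walk_bound"
    using length_walk_le[of "top_piece x"] by (simp add: height_def)
  moreover have "(a, snd p) \<in> set (stacked ?A (?w @ s))"
    using p stacked_append[of ?A ?w s] by (metis UnI1 prod.collapse set_append)
  ultimately show ?thesis by blast
qed

lemma mset_levels_pad_below_height:
  "mset (filter (\<lambda>p. snd p \<le> height x) (levels (x @ walk (top_piece x) @ s))) = mset (levels x)"
proof -
  have "filter (\<lambda>p. snd p \<le> height x) (levels x) = levels x"
    using level_le_height by (simp add: filter_id_conv)
  moreover have "filter (\<lambda>p. snd p \<le> height x) (stacked (levels x) (walk (top_piece x) @ s)) = []"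
    using pad_levels_above by (force simp: filter_empty_conv)
  ultimately show ?thesis unfolding levels_pad by simp
qed

text \<open>If x1 were lower than x2 by at least walk_bound, padding x1 would put an a at a level at
most height x2, where the common padded heap has exactly the pieces of x2, which contains no a.\<close>

lemma pad_heights_not_less:
  assumes "a \<notin> set x2" "height x1 mod walk_bound = height x2 mod walk_bound"
    and "height x1 < height x2"
    and "mset (levels (x1 @ walk (top_piece x1) @ s1)) = mset (levels (x2 @ walk (top_piece x2) @ s2))"
  shows False
proof -
  have "walk_bound dvd height x2 - height x1"
    using assms(2,3) mod_eq_dvd_iff_nat by (metis less_imp_le)
  then have "walk_bound \<le> height x2 - height x1"
    using assms(3) by (intro dvd_imp_le) auto
  then have "height x1 + walk_bound \<le> height x2" using assms(3) by arith
  moreover obtain h where "(a, h) \<in> set (stacked (levels x1) (walk (top_piece x1) @ s1))"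
    and "h \<le> height x1 + walk_bound"
    using pad_level_a_le by blast
  ultimately have "(a, h) \<in> set (filter (\<lambda>p. snd p \<le> height x2) (levels (x1 @ walk (top_piece x1) @ s1)))"
    by (simp add: levels_pad)
  also have "\<dots> = set (filter (\<lambda>p. snd p \<le> height x2) (levels (x2 @ walk (top_piece x2) @ s2)))"
    using assms(4) by (metis mset_filter set_mset_mset)
  also have "\<dots> = set (levels x2)" by (metis mset_levels_pad_below_height set_mset_mset)
  finally have "a \<in> set (map fst (levels x2))" by (metis fst_conv image_eqI set_map)
  then show False using assms(1) map_fst_levels by simp
qed

lemma heap_equiv_cancel_pad:
  assumes "a \<notin> set x1" "a \<notin> set x2" "height x1 mod walk_bound = height x2 mod walk_bound"
    and "heap_equiv I (x1 @ walk (top_piece x1) @ s1) (x2 @ walk (top_piece x2) @ s2)"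
  shows "heap_equiv I x1 x2"
proof -
  have m: "mset (levels (x1 @ walk (top_piece x1) @ s1)) = mset (levels (x2 @ walk (top_piece x2) @ s2))"
    using assms(4) heap_equiv_iff_mset_levels by blast
  have "height x1 = height x2"
    using pad_heights_not_less[OF assms(2,3) _ m] pad_heights_not_less[OF assms(1) assms(3)[symmetric] _ m[symmetric]]
    by (meson linorder_neqE_nat)
  then have "mset (filter (\<lambda>p. snd p \<le> height x1) (levels (x1 @ walk (top_piece x1) @ s1)))
      = mset (filter (\<lambda>p. snd p \<le> height x2) (levels (x2 @ walk (top_piece x2) @ s2)))"
    using m by (simp add: mset_filter)
  then show ?thesis by (metis mset_levels_pad_below_height heap_equiv_iff_mset_levels)
qed

definition pad_heap :: "'a list set \<Rightarrow> 'a list set" where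
  "pad_heap x = heap_of I (walk (top_piece (rep x)))"

lemma heap_equiv_rep_pad:
  "heap_equiv I (rep (hmult I x (pad_heap x))) (rep x @ walk (top_piece (rep x)))"
  using heap_equiv_trans[OF heap_equiv_rep_hmult
      heap_equiv_append[OF heap_equiv_refl heap_equiv_sym[OF heap_equiv_rep_heap_of]]]
  by (simp add: pad_heap_def)

text \<open>A common point of the two cylinders yields a common upper bound of the padded heaps.\<close>

lemma up_pad_disjoint:
  assumes "x1 \<in> heaps I" "x2 \<in> heaps I" "hcount a x1 = 0" "hcount a x2 = 0"
    and "height (rep x1) mod walk_bound = height (rep x2) mod walk_bound" and "x1 \<noteq> x2"
  shows "up I (hmult I x1 (pad_heap x1)) \<inter> up I (hmult I x2 (pad_heap x2)) = {}"
proof (rule ccontr)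
  assume "up I (hmult I x1 (pad_heap x1)) \<inter> up I (hmult I x2 (pad_heap x2)) \<noteq> {}"
  then obtain \<xi> where \<xi>: "\<xi> \<in> up I (hmult I x1 (pad_heap x1))" "\<xi> \<in> up I (hmult I x2 (pad_heap x2))"
    by blast
  obtain n1 where n1: "\<forall>m\<ge>n1. \<exists>t. heap_equiv I (boundary_word \<xi> m) (rep (hmult I x1 (pad_heap x1)) @ t)"
    using up_boundary_word[OF hmult_in_heaps \<xi>(1)] by blast
  obtain n2 where n2: "\<forall>m\<ge>n2. \<exists>t. heap_equiv I (boundary_word \<xi> m) (rep (hmult I x2 (pad_heap x2)) @ t)"
    using up_boundary_word[OF hmult_in_heaps \<xi>(2)] by blast
  let ?u = "boundary_word \<xi> (max n1 n2)"
  obtain t1 t2 where t1: "heap_equiv I ?u (rep (hmult I x1 (pad_heap x1)) @ t1)"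
    and t2: "heap_equiv I ?u (rep (hmult I x2 (pad_heap x2)) @ t2)"
    using n1 n2 by (meson max.cobounded1 max.cobounded2)
  have "heap_equiv I ?u (rep x1 @ walk (top_piece (rep x1)) @ t1)"
    using heap_equiv_trans[OF t1 heap_equiv_append[OF heap_equiv_rep_pad heap_equiv_refl]] by simp
  moreover have "heap_equiv I ?u (rep x2 @ walk (top_piece (rep x2)) @ t2)"
    using heap_equiv_trans[OF t2 heap_equiv_append[OF heap_equiv_rep_pad heap_equiv_refl]] by simp
  ultimately have "heap_equiv I (rep x1 @ walk (top_piece (rep x1)) @ t1) (rep x2 @ walk (top_piece (rep x2)) @ t2)"
    using heap_equiv_trans[OF heap_equiv_sym] by blast
  moreover have "a \<notin> set (rep x1)" "a \<notin> set (rep x2)"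
    using assms(3,4) by (auto simp: hcount_def count_list_0_iff)
  ultimately have "heap_equiv I (rep x1) (rep x2)"
    using heap_equiv_cancel_pad assms(5) by blast
  then show False using assms(1,2,6) heap_of_eq_iff heap_of_rep by metis
qed

end

subsection \<open>Summability\<close>

locale bernoulli_heaps = connected_independence I for I :: "'a::finite \<Rightarrow> 'a \<Rightarrow> bool" +
  fixes P :: "(nat \<Rightarrow> 'a set) measure"
  assumes bernoulli: "bernoulli I P"
begin

abbreviation prob_up :: "'a list set \<Rightarrow> real" where
  "prob_up x \<equiv> measure P (up I x)"

abbreviation heaps_without :: "'a \<Rightarrow> 'a list set set" where
  "heaps_without a \<equiv> {x \<in> heaps I. hcount a x = 0}"

lemma prob_space_P: "prob_space P"
  using bernoulli by (simp add: bernoulli_def)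

lemma prob_up_hmult: "x \<in> heaps I \<Longrightarrow> y \<in> heaps I \<Longrightarrow> prob_up (hmult I x y) = prob_up x * prob_up y"
  using bernoulli by (simp add: bernoulli_def)

lemma prob_up_pos: "x \<in> heaps I \<Longrightarrow> 0 < prob_up x"
  using bernoulli by (simp add: bernoulli_def)

lemma up_in_sets: "x \<in> heaps I \<Longrightarrow> up I x \<in> sets P"
  using bernoulli unfolding bernoulli_def by (auto intro: sigma_sets.Basic)

definition min_walk_prob :: real where
  "min_walk_prob = Min (range (\<lambda>b. prob_up (heap_of I (walk b))))"

lemma min_walk_prob_pos: "0 < min_walk_prob"
  unfolding min_walk_prob_def by (subst Min_gr_iff) (auto intro: prob_up_pos)

lemma min_walk_prob_le: "min_walk_prob \<le> prob_up (pad_heap x)"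
  unfolding min_walk_prob_def pad_heap_def by (rule Min_le) auto

definition mass_bound :: real where
  "mass_bound = real walk_bound / min_walk_prob"

lemma mass_bound_nonneg: "0 \<le> mass_bound"
  using min_walk_prob_pos by (simp add: mass_bound_def)

lemma sum_prob_up_residue_class_le:
  assumes "finite F" "F \<subseteq> heaps_without a"
  shows "min_walk_prob * sum prob_up {x \<in> F. height (rep x) mod walk_bound = r} \<le> 1"
proof -
  interpret prob_space P by (rule prob_space_P)
  let ?G = "{x \<in> F. height (rep x) mod walk_bound = r}"
  have disjoint: "disjoint_family_on (\<lambda>x. up I (hmult I x (pad_heap x))) ?G"
    unfolding disjoint_family_on_def
  proof (intro ballI impI)
    fix x y assume "x \<in> ?G" "y \<in> ?G" "x \<noteq> y"
    then show "up I (hmult I x (pad_heap x)) \<inter> up I (hmult I y (pad_heap y)) = {}"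
      using assms(2) by (intro up_pad_disjoint[where a=a]) auto
  qed
  have "(\<lambda>x. up I (hmult I x (pad_heap x))) ` ?G \<subseteq> sets P"
    using up_in_sets hmult_in_heaps by auto
  then have "(\<Sum>x\<in>?G. prob_up (hmult I x (pad_heap x))) = prob (\<Union>x\<in>?G. up I (hmult I x (pad_heap x)))"
    using assms(1) by (intro finite_measure_finite_Union[symmetric, OF _ _ disjoint]) auto
  also have "\<dots> \<le> 1" by simp
  finally have padded_le_1: "(\<Sum>x\<in>?G. prob_up (hmult I x (pad_heap x))) \<le> 1" .
  have "min_walk_prob * sum prob_up ?G = (\<Sum>x\<in>?G. prob_up x * min_walk_prob)"
    by (simp add: sum_distrib_left mult.commute)
  also have "\<dots> \<le> (\<Sum>x\<in>?G. prob_up (hmult I x (pad_heap x)))"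
  proof (rule sum_mono)
    fix x assume "x \<in> ?G"
    then have "x \<in> heaps I" using assms(2) by auto
    then have "prob_up (hmult I x (pad_heap x)) = prob_up x * prob_up (pad_heap x)"
      by (simp add: prob_up_hmult pad_heap_def)
    then show "prob_up x * min_walk_prob \<le> prob_up (hmult I x (pad_heap x))"
      using min_walk_prob_le[of x] by (simp add: mult_left_mono)
  qed
  finally show ?thesis using padded_le_1 by simp
qed

lemma sum_prob_up_le:
  assumes "finite F" "F \<subseteq> heaps_without a"
  shows "sum prob_up F \<le> mass_bound"
proof -
  have "sum prob_up F = (\<Sum>r<walk_bound. sum prob_up {x \<in> F. height (rep x) mod walk_bound = r})"
    by (rule sum.group[symmetric]) (use assms(1) walk_bound_pos in auto)
  also have "\<dots> \<le> (\<Sum>r<walk_bound. 1 / min_walk_prob)"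
    using sum_prob_up_residue_class_le[OF assms] min_walk_prob_pos
    by (intro sum_mono) (simp add: field_simps mult.commute)
  also have "\<dots> = mass_bound" by (simp add: mass_bound_def)
  finally show ?thesis .
qed

text \<open>A heap x of length n is the product y z of the heaps of its n splittings (take i, drop i)
of its representative, and distinct splittings give distinct pairs (y, z).\<close>

lemma sum_hlen_le_sum_splittings:
  assumes "finite F" "F \<subseteq> heaps_without a" "\<And>x. 0 \<le> \<phi> x"
  shows "\<exists>F1 F2. finite F1 \<and> F1 \<subseteq> heaps_without a \<and> finite F2 \<and> F2 \<subseteq> heaps_without a \<and>
     (\<Sum>x\<in>F. real (hlen x) * \<phi> x * prob_up x)
       \<le> (\<Sum>y\<in>F1. \<Sum>z\<in>F2. \<phi> (hmult I y z) * prob_up y * prob_up z)"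
proof -
  define S where "S = Sigma F (\<lambda>x. {..<hlen x})"
  define split where "split q = (heap_of I (take (snd q) (rep (fst q))), heap_of I (drop (snd q) (rep (fst q))))" for q
  define H where "H q = \<phi> (hmult I (fst q) (snd q)) * prob_up (fst q) * prob_up (snd q)" for q
  define F1 where "F1 = fst ` split ` S"
  define F2 where "F2 = snd ` split ` S"
  have "finite S" unfolding S_def using assms(1) by auto
  then have fin: "finite F1" "finite F2" by (auto simp: F1_def F2_def)
  have hmult_split: "hmult I (fst (split q)) (snd (split q)) = fst q" if "q \<in> S" for q
    using that assms(2) by (auto simp: S_def split_def hmult_heap_of heap_of_rep)
  have "inj_on split S"
  proof (rule inj_onI)
    fix p q assume pq: "p \<in> S" "q \<in> S" "split p = split q"
    then have "fst p = fst q" using hmult_split by metis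
    moreover have "hlen (fst (split q)) = snd q" if "q \<in> S" for q
      using that hlen_heap_of[of "take (snd q) (rep (fst q))"] by (auto simp: split_def S_def hlen_def)
    then have "snd p = snd q" using pq by metis
    ultimately show "p = q" by (simp add: prod_eq_iff)
  qed
  have "fst (split q) \<in> heaps_without a \<and> snd (split q) \<in> heaps_without a" if "q \<in> S" for q
  proof -
    have "count_list (rep (fst q)) a = 0" using that assms(2) by (auto simp: S_def hcount_def)
    then have "count_list (take (snd q) (rep (fst q))) a + count_list (drop (snd q) (rep (fst q))) a = 0"
      by (metis append_take_drop_id count_list_append)
    then show ?thesis by (simp add: split_def hcount_heap_of)
  qed
  then have sub: "F1 \<subseteq> heaps_without a" "F2 \<subseteq> heaps_without a" by (auto simp: F1_def F2_def)
  have "(\<Sum>x\<in>F. real (hlen x) * \<phi> x * prob_up x) = (\<Sum>x\<in>F. \<Sum>i<hlen x. \<phi> x * prob_up x)"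
    by (simp add: mult.assoc)
  also have "\<dots> = (\<Sum>q\<in>S. \<phi> (fst q) * prob_up (fst q))"
    unfolding S_def by (subst sum.Sigma) (use assms(1) in \<open>auto simp: case_prod_beta\<close>)
  also have "\<dots> = (\<Sum>q\<in>S. H (split q))"
  proof (rule sum.cong[OF refl])
    fix q assume "q \<in> S"
    have "fst (split q) \<in> heaps I" "snd (split q) \<in> heaps I" by (auto simp: split_def)
    then show "\<phi> (fst q) * prob_up (fst q) = H (split q)"
      unfolding H_def using hmult_split[OF \<open>q \<in> S\<close>] prob_up_hmult by (metis mult.assoc)
  qed
  also have "\<dots> = (\<Sum>p\<in>split ` S. H p)"
    using sum.reindex[OF \<open>inj_on split S\<close>, of H] by (simp add: comp_def)
  also have "\<dots> \<le> (\<Sum>p\<in>F1 \<times> F2. H p)"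
    using fin assms(3) unfolding F1_def F2_def H_def by (intro sum_mono2 subset_fst_snd) auto
  also have "\<dots> = (\<Sum>y\<in>F1. \<Sum>z\<in>F2. \<phi> (hmult I y z) * prob_up y * prob_up z)"
    by (simp add: sum.cartesian_product H_def case_prod_beta)
  finally show ?thesis using fin sub by blast
qed

lemma sum_hlen_prob_up_le:
  assumes "finite F" "F \<subseteq> heaps_without a"
  shows "(\<Sum>x\<in>F. real (hlen x) * prob_up x) \<le> mass_bound ^ 2"
proof -
  obtain F1 F2 where F: "finite F1" "F1 \<subseteq> heaps_without a" "finite F2" "F2 \<subseteq> heaps_without a"
    and le: "(\<Sum>x\<in>F. real (hlen x) * 1 * prob_up x) \<le> (\<Sum>y\<in>F1. \<Sum>z\<in>F2. 1 * prob_up y * prob_up z)"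
    using sum_hlen_le_sum_splittings[OF assms, of "\<lambda>_. 1"] by auto
  have "(\<Sum>y\<in>F1. \<Sum>z\<in>F2. 1 * prob_up y * prob_up z) = sum prob_up F1 * sum prob_up F2"
    by (simp add: sum_product)
  also have "\<dots> \<le> mass_bound * mass_bound"
    using sum_prob_up_le[OF F(1,2)] sum_prob_up_le[OF F(3,4)] mass_bound_nonneg
    by (intro mult_mono) (auto intro: sum_nonneg)
  finally show ?thesis using le by (simp add: power2_eq_square)
qed

lemma sum_hlen_sq_prob_up_le:
  assumes "finite F" "F \<subseteq> heaps_without a"
  shows "(\<Sum>x\<in>F. real (hlen x) ^ 2 * prob_up x) \<le> 2 * mass_bound ^ 3"
proof -
  obtain F1 F2 where F: "finite F1" "F1 \<subseteq> heaps_without a" "finite F2" "F2 \<subseteq> heaps_without a"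
    and le: "(\<Sum>x\<in>F. real (hlen x) * real (hlen x) * prob_up x)
      \<le> (\<Sum>y\<in>F1. \<Sum>z\<in>F2. real (hlen (hmult I y z)) * prob_up y * prob_up z)"
    using sum_hlen_le_sum_splittings[OF assms, of "\<lambda>x. real (hlen x)"] by auto
  have "(\<Sum>y\<in>F1. \<Sum>z\<in>F2. real (hlen (hmult I y z)) * prob_up y * prob_up z)
      = (\<Sum>y\<in>F1. real (hlen y) * prob_up y) * sum prob_up F2
        + sum prob_up F1 * (\<Sum>z\<in>F2. real (hlen z) * prob_up z)"
    by (simp add: hlen_hmult distrib_right sum.distrib sum_product mult.assoc mult.left_commute)
  also have "\<dots> \<le> mass_bound ^ 2 * mass_bound + mass_bound * mass_bound ^ 2"
    using sum_prob_up_le[OF F(1,2)] sum_prob_up_le[OF F(3,4)]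
      sum_hlen_prob_up_le[OF F(1,2)] sum_hlen_prob_up_le[OF F(3,4)] mass_bound_nonneg
    by (intro add_mono mult_mono) (auto intro!: sum_nonneg)
  finally show ?thesis using le by (simp add: power2_eq_square power3_eq_cube algebra_simps)
qed

lemma summable_prob_up:
  "prob_up summable_on heaps_without a
   \<and> (\<lambda>x. real (hlen x) * prob_up x) summable_on heaps_without a
   \<and> (\<lambda>x. real (hlen x) ^ 2 * prob_up x) summable_on heaps_without a"
proof (intro conjI)
  show "prob_up summable_on heaps_without a"
    by (rule nonneg_bdd_above_summable_on) (auto intro!: bdd_aboveI[where M=mass_bound] sum_prob_up_le)
  show "(\<lambda>x. real (hlen x) * prob_up x) summable_on heaps_without a"
    by (rule nonneg_bdd_above_summable_on)
      (auto intro!: bdd_aboveI[where M="mass_bound ^ 2"] sum_hlen_prob_up_le)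
  show "(\<lambda>x. real (hlen x) ^ 2 * prob_up x) summable_on heaps_without a"
    by (rule nonneg_bdd_above_summable_on)
      (auto intro!: bdd_aboveI[where M="2 * mass_bound ^ 3"] sum_hlen_sq_prob_up_le)
qed

end

theorem lemma5:
  fixes I :: "'a::finite \<Rightarrow> 'a \<Rightarrow> bool" and P :: "(nat \<Rightarrow> 'a set) measure" and a :: 'a
  assumes "CARD('a) \<ge> 2"
    and "symp I" and "irreflp I"
    and "\<forall>b c. (\<lambda>x y. \<not> I x y)\<^sup>*\<^sup>* b c"
    and "bernoulli I P"
  shows "(\<lambda>x. measure P (up I x)) summable_on {x \<in> heaps I. hcount a x = 0}
       \<and> (\<lambda>x. real (hlen x) * measure P (up I x)) summable_on {x \<in> heaps I. hcount a x = 0}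
       \<and> (\<lambda>x. real (hlen x) ^ 2 * measure P (up I x)) summable_on {x \<in> heaps I. hcount a x = 0}"
proof -
  interpret bernoulli_heaps I P
    using assms(2-5) by unfold_locales auto
  show ?thesis by (rule summable_prob_up)
qed

end
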